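(* Let $A \in \mathbb{R}^{n\times d}$, $b \in \mathbb{R}^n$, let $\lbrace w_l : l\geq 0\rbrace \subset \mathbb{R}^n$ be an arbitrary sequence, let $x_0 \in \mathbb{R}^d$ be arbitrary and $S_0 = I_d$, and for $l \geq 0$ define $$x_{l+1} = \begin{cases} x_l + \dfrac{S_l A' w_l w_l'(b - A x_l)}{w_l' A S_l A' w_l} & \text{if } S_l A'w_l \neq 0,\\ x_l & \text{otherwise,}\end{cases}\qquad S_{l+1} = \begin{cases} S_l - \dfrac{S_l A' w_l w_l' A S_l}{w_l' A S_l A' w_l} & \text{if } S_l A' w_l \neq 0,\\ S_l & \text{otherwise.}\end{cases}$$ Then for every $l \geq 0$, $x_{l+1} \in \mathrm{span}\lbrace x_0, A'w_0,\ldots,A'w_l\rbrace$.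
   Context: $A'$ denotes transpose; $I_d$ is the $d \times d$ identity. *)

theory Defs
  imports "HOL-Analysis.Analysis"
begin

definition outer_prod :: "real^'m \<Rightarrow> real^'k \<Rightarrow> real^'k^'m" where
  "outer_prod u v = (\<chi> i j. u $ i * v $ j)"

fun proj_iter ::
  "real^'d^'n \<Rightarrow> real^'n \<Rightarrow> (nat \<Rightarrow> real^'n) \<Rightarrow> real^'d \<Rightarrow> nat \<Rightarrow> (real^'d) \<times> (real^'d^'d)" where
  "proj_iter A b w x0 0 = (x0, mat 1)"
| "proj_iter A b w x0 (Suc l) =
     (let (x, S) = proj_iter A b w x0 l;
          v = S *v (transpose A *v w l);
          den = w l \<bullet> (A *v (S *v (transpose A *v w l)))
      in if v \<noteq> 0
         then (x + (1 / den) *\<^sub>R ((w l \<bullet> (b - A *v x)) *\<^sub>R v),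
               S - (1 / den) *\<^sub>R outer_prod v (w l v* (A ** S)))
         else (x, S))"

end

theory Submission
  imports Defs
begin

(* Induction on l: the columns of S_l - I_d lie in span {A'w_j : j < l}. Hence the search
   direction S_l A'w_l = (S_l - I_d) A'w_l + A'w_l lies in span {A'w_j : j \<le> l}, and both
   updates change x_l and S_l - I_d only by multiples of that direction. *)

lemma outer_prod_mult_vec: "outer_prod u v *v y = (v \<bullet> y) *\<^sub>R u"
  by (simp add: vec_eq_iff outer_prod_def matrix_vector_mult_def inner_vec_def
      sum_distrib_left sum_distrib_right mult.commute mult.left_commute)

lemma matrix_vector_mult_in_span:
  assumes "\<And>y. S *v y - y \<in> span W" and "a \<in> span W"
  shows "S *v a \<in> span W"
proof -
  have "S *v a = (S *v a - a) + a" by simp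
  then show ?thesis using assms by (metis span_add)
qed

lemma rank_one_update_in_span:
  assumes "\<And>y. S *v y - y \<in> span W" and "v \<in> span W"
  shows "(S - c *\<^sub>R outer_prod v u) *v y - y \<in> span W"
proof -
  have "(S - c *\<^sub>R outer_prod v u) *v y = S *v y - c *\<^sub>R (outer_prod v u *v y)"
    by (simp add: matrix_vector_mult_diff_rdistrib scaleR_matrix_vector_assoc)
  then have "(S - c *\<^sub>R outer_prod v u) *v y - y = (S *v y - y) - (c * (u \<bullet> y)) *\<^sub>R v"
    by (simp add: outer_prod_mult_vec)
  then show ?thesis using assms by (metis span_diff span_scale)
qed

lemma proj_iter_in_span:
  fixes A :: "real^'d^'n" and b :: "real^'n" and w :: "nat \<Rightarrow> real^'n" and x0 :: "real^'d"
  defines "W l \<equiv> (\<lambda>j. transpose A *v w j) ` {..<l}"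
  shows "fst (proj_iter A b w x0 l) \<in> span (insert x0 (W l))
     \<and> (\<forall>y. snd (proj_iter A b w x0 l) *v y - y \<in> span (W l))"
proof (induction l)
  case 0
  then show ?case by (simp add: W_def span_base)
next
  case (Suc l)
  obtain x S where xS: "proj_iter A b w x0 l = (x, S)" by fastforce
  have x: "x \<in> span (insert x0 (W l))" and S: "\<And>y. S *v y - y \<in> span (W l)"
    using Suc xS by auto
  have W_mono: "span (W l) \<subseteq> span (W (Suc l))"
    by (rule span_mono) (auto simp: W_def)
  have S': "S *v y - y \<in> span (W (Suc l))" for y
    using S W_mono by blast
  have "span (insert x0 (W l)) \<subseteq> span (insert x0 (W (Suc l)))"
    by (rule span_mono) (auto simp: W_def)
  then have x': "x \<in> span (insert x0 (W (Suc l)))"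
    using x by blast
  define a where "a = transpose A *v w l"
  have "a \<in> span (W (Suc l))"
    unfolding a_def W_def by (rule span_base) auto
  then have v: "S *v a \<in> span (W (Suc l))"
    using S' by (rule matrix_vector_mult_in_span[rotated])
  then have v': "S *v a \<in> span (insert x0 (W (Suc l)))"
    using span_mono[of "W (Suc l)" "insert x0 (W (Suc l))"] by blast
  show ?case
  proof (cases "S *v a = 0")
    case True
    then show ?thesis using xS x' S' by (simp add: a_def)
  next
    case False
    then show ?thesis
      using xS x' v v' S' rank_one_update_in_span[OF S' v]
      by (simp add: a_def Let_def span_add span_scale)
  qed
qed

theorem mainTheorem3:
  fixes A :: "real^'d^'n" and b :: "real^'n" and w :: "nat \<Rightarrow> real^'n" and x0 :: "real^'d"
  shows "\<forall>l. fst (proj_iter A b w x0 (Suc l))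
           \<in> span (insert x0 ((\<lambda>j. transpose A *v w j) ` {0..l}))"
proof
  fix l
  have "{0..l} = {..<Suc l}" by auto
  then show "fst (proj_iter A b w x0 (Suc l))
           \<in> span (insert x0 ((\<lambda>j. transpose A *v w j) ` {0..l}))"
    using proj_iter_in_span[of A b w x0 "Suc l"] by simp
qed

end
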